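(* Let $\mathcal{X}$ be a feature space, $p(\boldsymbol{x},y)$ a joint density on $\mathcal{X}\times\{+1,-1\}$ with class priors $\pi_+=p(y=+1)\in(0,1)$, $\pi_-=1-\pi_+$ and class-conditional densities $p_+,p_-$. Let $\ell:\mathbb{R}\times\{+1,-1\}\to\mathbb{R}_+$ be a loss function and $f:\mathcal{X}\to\mathbb{R}$ a classifier with classification risk $$R(f)=\mathbb{E}_{p(\boldsymbol{x},y)}[\ell(f(\boldsymbol{x}),y)]=\pi_+\mathbb{E}_{p_+(\boldsymbol{x})}[\ell(f(\boldsymbol{x}),+1)]+\pi_-\mathbb{E}_{p_-(\boldsymbol{x})}[\ell(f(\boldsymbol{x}),-1)].$$ Define $$\widetilde{p}_+(\boldsymbol{x})=\frac{\pi_+}{\pi_-^2+\pi_+}p_+(\boldsymbol{x})+\frac{\pi_-^2}{\pi_-^2+\pi_+}p_-(\boldsymbol{x}),\qquad \widetilde{p}_-(\boldsymbol{x})=\frac{\pi_+^2}{\pi_+^2+\pi_-}p_+(\boldsymbol{x})+\frac{\pi_-}{\pi_+^2+\pi_-}p_-(\boldsymbol{x}).$$ Then $R(f)=R_{\mathrm{PC}}(f)$, where $$R_{\mathrm{PC}}(f)=\mathbb{E}_{\widetilde{p}_+(\boldsymbol{x})}\big[\ell(f(\boldsymbol{x}),+1)-\pi_+\ell(f(\boldsymbol{x}),-1)\big]+\mathbb{E}_{\widetilde{p}_-(\boldsymbol{x}')}\big[\ell(f(\boldsymbol{x}'),-1)-\pi_-\ell(f(\boldsymbol{x}'),+1)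\big].$$
   Context: $\widetilde{p}_+$ and $\widetilde{p}_-$ are the marginal densities of the first and second components of pairwise comparison data, i.e. pairs $(\boldsymbol{x},\boldsymbol{x}')$ of unlabeled points generated by drawing two labeled points independently from $p(\boldsymbol{x},y)$ and conditioning on their labels lying in $\{(+1,+1),(+1,-1),(-1,-1)\}$. *)

theory Defs
  imports "HOL-Analysis.Analysis"
begin

text \<open>Feature space: a measure space M (base measure for the densities).
  Labels +1 / -1 are represented as the integers 1 and -1.
  Expectation of g under a density q w.r.t. M.\<close>
definition expect_dens :: "'a measure \<Rightarrow> ('a \<Rightarrow> real) \<Rightarrow> ('a \<Rightarrow> real) \<Rightarrow> real" where
  "expect_dens M q g = (\<integral>x. q x * g x \<partial>M)"

definition is_density :: "'a measure \<Rightarrow> ('a \<Rightarrow> real) \<Rightarrow> bool" where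
  "is_density M q \<longleftrightarrow> q \<in> borel_measurable M \<and> (\<forall>x\<in>space M. 0 \<le> q x)
      \<and> integrable M q \<and> (\<integral>x. q x \<partial>M) = 1"

definition risk :: "'a measure \<Rightarrow> real \<Rightarrow> ('a \<Rightarrow> real) \<Rightarrow> ('a \<Rightarrow> real)
    \<Rightarrow> (real \<Rightarrow> int \<Rightarrow> real) \<Rightarrow> ('a \<Rightarrow> real) \<Rightarrow> real" where
  "risk M pip pp pn l f =
     pip * expect_dens M pp (\<lambda>x. l (f x) 1) + (1 - pip) * expect_dens M pn (\<lambda>x. l (f x) (-1))"

definition ptilde_pos :: "real \<Rightarrow> ('a \<Rightarrow> real) \<Rightarrow> ('a \<Rightarrow> real) \<Rightarrow> 'a \<Rightarrow> real" where
  "ptilde_pos pip pp pn x =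
     pip / ((1 - pip)^2 + pip) * pp x + (1 - pip)^2 / ((1 - pip)^2 + pip) * pn x"

definition ptilde_neg :: "real \<Rightarrow> ('a \<Rightarrow> real) \<Rightarrow> ('a \<Rightarrow> real) \<Rightarrow> 'a \<Rightarrow> real" where
  "ptilde_neg pip pp pn x =
     pip^2 / (pip^2 + (1 - pip)) * pp x + (1 - pip) / (pip^2 + (1 - pip)) * pn x"

definition risk_PC :: "'a measure \<Rightarrow> real \<Rightarrow> ('a \<Rightarrow> real) \<Rightarrow> ('a \<Rightarrow> real)
    \<Rightarrow> (real \<Rightarrow> int \<Rightarrow> real) \<Rightarrow> ('a \<Rightarrow> real) \<Rightarrow> real" where
  "risk_PC M pip pp pn l f =
     expect_dens M (ptilde_pos pip pp pn) (\<lambda>x. l (f x) 1 - pip * l (f x) (-1))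
   + expect_dens M (ptilde_neg pip pp pn) (\<lambda>x. l (f x) (-1) - (1 - pip) * l (f x) 1)"

end

theory Submission
  imports Defs
begin

text \<open>Both risks are linear combinations of the four expectations E_{p_a}[l(f x, b)],
  a, b = +1, -1. The two mixtures share the normaliser
  D = pi_-^2 + pi_+ = pi_+^2 + pi_- = 1 - pi_+ pi_-. In R_PC the cross terms
  E_{p_+}[l(f x, -1)] and E_{p_-}[l(f x, +1)] cancel, and the diagonal coefficients are
  pi_+ (1 - pi_+ pi_-) / D = pi_+ and pi_- (1 - pi_+ pi_-) / D = pi_-.
  So only integrability is used: the identity holds for every real prior, whether or not
  the densities are normalised or the loss is nonnegative.\<close>

lemma expect_dens_mixture:
  fixes p q g :: "'a \<Rightarrow> real"
  assumes "integrable M (\<lambda>x. p x * g x)" and "integrable M (\<lambda>x. q x * g x)"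
  shows "expect_dens M (\<lambda>x. a * p x + b * q x) g
           = a * expect_dens M p g + b * expect_dens M q g"
proof -
  have "(\<lambda>x. (a * p x + b * q x) * g x) = (\<lambda>x. a * (p x * g x) + b * (q x * g x))"
    by (simp add: algebra_simps)
  then show ?thesis
    using assms by (simp add: expect_dens_def)
qed

lemma integrable_mult_diff_scaled:
  fixes p g h :: "'a \<Rightarrow> real"
  assumes "integrable M (\<lambda>x. p x * g x)" and "integrable M (\<lambda>x. p x * h x)"
  shows "integrable M (\<lambda>x. p x * (g x - c * h x))"
proof -
  have "(\<lambda>x. p x * (g x - c * h x)) = (\<lambda>x. p x * g x - c * (p x * h x))"
    by (simp add: algebra_simps)
  then show ?thesis
    using assms by simp
qed

lemma expect_dens_diff_scaled:
  fixes p g h :: "'a \<Rightarrow> real"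
  assumes "integrable M (\<lambda>x. p x * g x)" and "integrable M (\<lambda>x. p x * h x)"
  shows "expect_dens M p (\<lambda>x. g x - c * h x) = expect_dens M p g - c * expect_dens M p h"
proof -
  have "(\<lambda>x. p x * (g x - c * h x)) = (\<lambda>x. p x * g x - c * (p x * h x))"
    by (simp add: algebra_simps)
  then show ?thesis
    using assms by (simp add: expect_dens_def)
qed

lemma pairwise_comparison_weights:
  fixes \<pi> A1 A2 B1 B2 :: real
  shows "\<pi> / ((1 - \<pi>)^2 + \<pi>) * (A1 - \<pi> * A2) + (1 - \<pi>)^2 / ((1 - \<pi>)^2 + \<pi>) * (B1 - \<pi> * B2)
       + (\<pi>^2 / (\<pi>^2 + (1 - \<pi>)) * (A2 - (1 - \<pi>) * A1)
          + (1 - \<pi>) / (\<pi>^2 + (1 - \<pi>)) * (B2 - (1 - \<pi>) * B1))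
       = \<pi> * A1 + (1 - \<pi>) * B2"
proof -
  define D where "D = 1 - \<pi> * (1 - \<pi>)"
  have "D = (\<pi> - 1/2)^2 + 3/4"
    unfolding D_def by (simp add: power2_eq_square algebra_simps)
  then have "D > 0"
    by (simp add: add_nonneg_pos)
  moreover have "(1 - \<pi>)^2 + \<pi> = D" and "\<pi>^2 + (1 - \<pi>) = D"
    unfolding D_def by (simp_all add: power2_eq_square algebra_simps)
  ultimately show ?thesis
    by (simp add: field_simps) (simp add: D_def power2_eq_square algebra_simps)
qed

theorem theorem3:
  fixes M :: "'a measure" and pip :: real and pp pn :: "'a \<Rightarrow> real"
    and l :: "real \<Rightarrow> int \<Rightarrow> real" and f :: "'a \<Rightarrow> real"
  assumes "0 < pip" and "pip < 1"
    and "is_density M pp" and "is_density M pn"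
    and "\<And>z y. 0 \<le> l z y"
    and "integrable M (\<lambda>x. pp x * l (f x) 1)" and "integrable M (\<lambda>x. pp x * l (f x) (-1))"
    and "integrable M (\<lambda>x. pn x * l (f x) 1)" and "integrable M (\<lambda>x. pn x * l (f x) (-1))"
  shows "risk M pip pp pn l f = risk_PC M pip pp pn l f"
proof -
  note integrable = assms(6-9)
  have ptilde: "ptilde_pos pip pp pn = (\<lambda>x. pip / ((1 - pip)^2 + pip) * pp x
                                        + (1 - pip)^2 / ((1 - pip)^2 + pip) * pn x)"
               "ptilde_neg pip pp pn = (\<lambda>x. pip^2 / (pip^2 + (1 - pip)) * pp x
                                        + (1 - pip) / (pip^2 + (1 - pip)) * pn x)"
    by (simp_all add: ptilde_pos_def ptilde_neg_def fun_eq_iff)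
  show ?thesis
    unfolding risk_PC_def ptilde risk_def
    by (simp only: expect_dens_mixture integrable_mult_diff_scaled expect_dens_diff_scaled
                   integrable pairwise_comparison_weights)
qed

end
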